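(* Let $d$ be prime, $n\ge 1$, $G$ invertible over $\mathbb Z_d$ with $N=(\det G)^{-1}$, and let $\rho,\sigma$ be $n$-qudit states. Then for all $\vec p,\vec q\in\mathbb Z_d^n$, $$\Xi_{\rho\boxtimes\sigma}(\vec p,\vec q)=\Xi_\rho(Ng_{11}\vec p,\ g_{00}\vec q)\;\Xi_\sigma(-Ng_{10}\vec p,\ g_{01}\vec q).$$
   Context: Fix a prime $d$; on $\mathcal H=\mathbb C^d$, $\chi(k)=e^{2\pi ik/d}$, $X|k\rangle=|k+1\rangle$, $Z|k\rangle=\chi(k)|k\rangle$. Weyl operators: $w(p,q)=\chi(-2^{-1}pq)Z^pX^q$ for odd $d$, $w(p,q)=i^{-pq}Z^pX^q$ for $d=2$, $w(\vec p,\vec q)=\bigotimes_k w(p_k,q_k)$. Characteristic function $\Xi_\rho(\vec p,\vec q)=\mathrm{Tr}[\rho\,w(-\vec p,-\vec q)]$. Let $G=\begin{pmatrix}g_{00}&g_{01}\\ g_{10}&g_{11}\end{pmatrix}$ over $\mathbb Z_d$ with $\det G\not\equiv0$, $N=(\det G)^{-1}$. Key unitary $U$ on $\mathcal H_A\otimes\mathcal H_B$ ($\mathcal H_A=\mathcal H_B=\mathcal H^{\otimes n}$): $U|\vec i\rangle|\vec j\rangle=|Ng_{11}\vec i-Ng_{10}\vec j\rangle|-Ng_{01}\vec i+Ng_{00}\vec j\rangle$. Convolution: $\rho\boxtimes\sigma=\mathrm{Tr}_B[U(\rho\otimes\sigma)U^\dagger]$. *)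

theory Defs
  imports Complex_Main "HOL-Computational_Algebra.Primes" "HOL-Library.FuncSet"
begin

text \<open>Computational basis of (C^d)^{\<otimes>n}: vectors in Z_d^n, represented by
  their representatives in {0..d-1}, as functions nat => int that vanish from n on.\<close>
definition idx :: "nat \<Rightarrow> nat \<Rightarrow> (nat \<Rightarrow> int) set" where
  "idx d n = {i. (\<forall>k<n. 0 \<le> i k \<and> i k < int d) \<and> (\<forall>k\<ge>n. i k = 0)}"

text \<open>Operators on (C^d)^{\<otimes>n} as matrices indexed by basis vectors: A a b = <a|A|b>.\<close>
type_synonym op = "(nat \<Rightarrow> int) \<Rightarrow> (nat \<Rightarrow> int) \<Rightarrow> complex"
type_synonym op2 = "((nat \<Rightarrow> int) \<times> (nat \<Rightarrow> int)) \<Rightarrow> ((nat \<Rightarrow> int) \<times> (nat \<Rightarrow> int)) \<Rightarrow> complex"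

definition inv_mod :: "nat \<Rightarrow> int \<Rightarrow> int" where
  "inv_mod d a = (SOME b. 0 \<le> b \<and> b < int d \<and> (a * b) mod int d = 1 mod int d)"

definition chi :: "nat \<Rightarrow> int \<Rightarrow> complex" where
  "chi d k = exp (2 * pi * \<i> * of_int k / of_nat d)"

text \<open>Matrix entries of Z^p X^q: Z^p X^q |b> = chi(p(b+q)) |b+q>.\<close>
definition ZX :: "nat \<Rightarrow> int \<Rightarrow> int \<Rightarrow> int \<Rightarrow> int \<Rightarrow> complex" where
  "ZX d p q a b = (if a mod int d = (b + q) mod int d then chi d (p * a) else 0)"

definition weyl1 :: "nat \<Rightarrow> int \<Rightarrow> int \<Rightarrow> int \<Rightarrow> int \<Rightarrow> complex" where
  "weyl1 d p q a b =
     (let p' = p mod int d; q' = q mod int d in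
      (if d = 2 then \<i> powi (- (p' * q')) else chi d (- (inv_mod d 2 * p' * q')))
      * ZX d p' q' a b)"

definition weyl :: "nat \<Rightarrow> nat \<Rightarrow> (nat \<Rightarrow> int) \<Rightarrow> (nat \<Rightarrow> int) \<Rightarrow> op" where
  "weyl d n p q a b = (\<Prod>k<n. weyl1 d (p k) (q k) (a k) (b k))"

definition tr :: "nat \<Rightarrow> nat \<Rightarrow> op \<Rightarrow> complex" where
  "tr d n A = (\<Sum>a\<in>idx d n. A a a)"

definition mmul :: "nat \<Rightarrow> nat \<Rightarrow> op \<Rightarrow> op \<Rightarrow> op" where
  "mmul d n A B a b = (\<Sum>c\<in>idx d n. A a c * B c b)"

definition charfun :: "nat \<Rightarrow> nat \<Rightarrow> op \<Rightarrow> (nat \<Rightarrow> int) \<Rightarrow> (nat \<Rightarrow> int) \<Rightarrow> complex" where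
  "charfun d n \<rho> p q = tr d n (mmul d n \<rho> (weyl d n (\<lambda>k. - p k) (\<lambda>k. - q k)))"

definition is_state :: "nat \<Rightarrow> nat \<Rightarrow> op \<Rightarrow> bool" where
  "is_state d n \<rho> \<longleftrightarrow>
     (\<forall>a\<in>idx d n. \<forall>b\<in>idx d n. \<rho> a b = cnj (\<rho> b a)) \<and>
     (\<forall>v :: (nat \<Rightarrow> int) \<Rightarrow> complex.
        let s = (\<Sum>a\<in>idx d n. \<Sum>b\<in>idx d n. cnj (v a) * \<rho> a b * v b) in Im s = 0 \<and> Re s \<ge> 0) \<and>
     tr d n \<rho> = 1"

definition vmod :: "nat \<Rightarrow> (nat \<Rightarrow> int) \<Rightarrow> (nat \<Rightarrow> int)" where
  "vmod d v = (\<lambda>k. v k mod int d)"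

definition keyU :: "nat \<Rightarrow> int \<Rightarrow> int \<Rightarrow> int \<Rightarrow> int \<Rightarrow> op2" where
  "keyU d g00 g01 g10 g11 ab ij =
     (let N = inv_mod d (g00 * g11 - g01 * g10); i = fst ij; j = snd ij in
      if fst ab = vmod d (\<lambda>k. N * g11 * i k - N * g10 * j k)
       \<and> snd ab = vmod d (\<lambda>k. - N * g01 * i k + N * g00 * j k) then 1 else 0)"

definition mmul2 :: "nat \<Rightarrow> nat \<Rightarrow> op2 \<Rightarrow> op2 \<Rightarrow> op2" where
  "mmul2 d n A B x y = (\<Sum>z\<in>idx d n \<times> idx d n. A x z * B z y)"

definition adj2 :: "op2 \<Rightarrow> op2" where
  "adj2 A x y = cnj (A y x)"

definition tensor :: "op \<Rightarrow> op \<Rightarrow> op2" where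
  "tensor \<rho> \<sigma> x y = \<rho> (fst x) (fst y) * \<sigma> (snd x) (snd y)"

definition ptraceB :: "nat \<Rightarrow> nat \<Rightarrow> op2 \<Rightarrow> op" where
  "ptraceB d n M a b = (\<Sum>j\<in>idx d n. M (a, j) (b, j))"

definition conv :: "nat \<Rightarrow> nat \<Rightarrow> int \<Rightarrow> int \<Rightarrow> int \<Rightarrow> int \<Rightarrow> op \<Rightarrow> op \<Rightarrow> op" where
  "conv d n g00 g01 g10 g11 \<rho> \<sigma> =
     ptraceB d n (mmul2 d n (mmul2 d n (keyU d g00 g01 g10 g11) (tensor \<rho> \<sigma>))
                            (adj2 (keyU d g00 g01 g10 g11)))"

end

theory Submission
  imports Defs
begin

text \<open>The key unitary permutes the product basis by the linear map \<open>G\<^sup>-\<^sup>1 = N adj G\<close>.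
  Hence pairing \<open>U (\<rho> \<otimes> \<sigma>) U\<^sup>\<dagger>\<close>, traced over \<open>B\<close>, with \<open>w(-p,-q)\<close> is pairing
  \<open>\<rho> \<otimes> \<sigma>\<close> with the pull-back of \<open>w(-p,-q) \<otimes> 1\<close> along \<open>G\<^sup>-\<^sup>1\<close>.  Weyl operators are
  covariant under such maps: entry by entry and qudit by qudit, the pull-back is
  \<open>w(-N g\<^sub>1\<^sub>1 p, -g\<^sub>0\<^sub>0 q) \<otimes> w(N g\<^sub>1\<^sub>0 p, -g\<^sub>0\<^sub>1 q)\<close>.  The supports match because \<open>G\<close>
  inverts the key map, and the phases multiply because
  \<open>p q \<equiv> (N g\<^sub>1\<^sub>1 p)(g\<^sub>0\<^sub>0 q) - (N g\<^sub>1\<^sub>0 p)(g\<^sub>0\<^sub>1 q) (mod d)\<close>, as \<open>N det G \<equiv> 1\<close>.  The trace of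
  \<open>(\<rho> \<otimes> \<sigma>)(A \<otimes> B)\<close> then splits into the product of the two characteristic functions.\<close>

lemma inv_mod_mult_dvd:
  assumes "prime d" and "a mod int d \<noteq> 0"
  shows "int d dvd inv_mod d a * a - 1"
proof -
  have "coprime (int d) a"
    using assms by (simp add: prime_imp_coprime dvd_eq_mod_eq_0)
  then obtain u where u: "(a * u) mod int d = 1 mod int d"
    by (metis bezout_int coprime_iff_gcd_eq_1 coprime_commute mod_mult_self2 mult.commute)
  have "int d > 0" using assms(1) prime_gt_0_nat by simp
  then have "\<exists>b. 0 \<le> b \<and> b < int d \<and> (a * b) mod int d = 1 mod int d"
    using u by (intro exI[of _ "u mod int d"]) (simp add: mod_mult_right_eq)
  then have "(a * inv_mod d a) mod int d = 1 mod int d"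
    unfolding inv_mod_def by (rule someI_ex[THEN conjunct2, THEN conjunct2])
  then show ?thesis by (simp add: mod_eq_dvd_iff mult.commute)
qed

lemma chi_add: "chi d (x + y) = chi d x * chi d y"
  unfolding chi_def by (simp add: distrib_left add_divide_distrib exp_add)

lemma chi_cong:
  assumes "d > 0" and "int d dvd x - y"
  shows "chi d x = chi d y"
proof -
  obtain k where "x = y + int d * k"
    using assms(2) by (metis dvdE diff_eq_eq add.commute)
  moreover have "chi d (int d * k) = cis (2 * pi * of_int k)"
    unfolding chi_def cis_conv_exp using assms(1) by (simp add: field_simps)
  ultimately show ?thesis by (simp add: chi_add)
qed

text \<open>\<open>G\<close> inverts the key map modulo \<open>m\<close>: the inputs whose images agree in the
  \<open>B\<close>-coordinate and differ by \<open>q\<close> in the \<open>A\<close>-coordinate differ by \<open>(g\<^sub>0\<^sub>0 q, g\<^sub>0\<^sub>1 q)\<close>.\<close>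

lemma key_shift_dvd_iff:
  fixes N g00 g01 g10 g11 i j i' j' q :: int
  assumes N: "m dvd N * (g00*g11 - g01*g10) - 1"
  shows "(m dvd (- N*g01*i + N*g00*j) - (- N*g01*i' + N*g00*j')
          \<and> m dvd (N*g11*i' - N*g10*j') - ((N*g11*i - N*g10*j) - q))
     \<longleftrightarrow> (m dvd i' - (i - g00*q) \<and> m dvd j' - (j - g01*q))"
    (is "(m dvd ?b \<and> m dvd ?a) \<longleftrightarrow> (m dvd ?i \<and> m dvd ?j)")
proof -
  let ?E = "N * (g00*g11 - g01*g10) - 1"
  have "?i = g00 * ?a - g10 * ?b - ?E * (i' - i)" and "?j = g01 * ?a - g11 * ?b - ?E * (j' - j)"
   and "?b = N*g01 * ?i - N*g00 * ?j" and "?a = N*g11 * ?i - N*g10 * ?j - ?E * q"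
    by (simp_all add: algebra_simps)
  then show ?thesis using N by (metis dvd_diff dvd_mult dvd_mult2)
qed

lemma ZX_mod_args:
  assumes "d > 0"
  shows "ZX d p q (a mod int d) (b mod int d) = ZX d p q a b"
proof -
  have "(b mod int d + q) mod int d = (b + q) mod int d"
    by (simp add: mod_add_left_eq)
  moreover have "chi d (p * (a mod int d)) = chi d (p * a)"
    by (rule chi_cong[OF assms]) (metis mod_eq_dvd_iff mod_mult_right_eq)
  ultimately show ?thesis unfolding ZX_def by (simp only: mod_mod_trivial)
qed

lemma ZX_mod_eq:
  assumes "d > 0"
  shows "ZX d (p mod int d) (q mod int d) a b = (if int d dvd a - (b + q) then chi d (p * a) else 0)"
proof -
  have "a mod int d = (b + q mod int d) mod int d \<longleftrightarrow> int d dvd a - (b + q)"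
    by (simp add: mod_add_right_eq mod_eq_dvd_iff)
  moreover have "chi d (p mod int d * a) = chi d (p * a)"
    by (rule chi_cong[OF assms]) (metis mod_eq_dvd_iff mod_mult_left_eq)
  ultimately show ?thesis unfolding ZX_def by simp
qed

lemma ZX_key_covariant:
  fixes N g00 g01 g10 g11 i j i' j' p q :: int
  assumes "d > 0" and N: "int d dvd N * (g00*g11 - g01*g10) - 1"
  shows "of_bool ((- N*g01*i + N*g00*j) mod int d = (- N*g01*i' + N*g00*j') mod int d)
       * ZX d ((- p) mod int d) ((- q) mod int d) ((N*g11*i' - N*g10*j') mod int d) ((N*g11*i - N*g10*j) mod int d)
     = ZX d ((- (N*g11*p)) mod int d) ((- (g00*q)) mod int d) i' i
       * ZX d ((- (- N*g10*p)) mod int d) ((- (g01*q)) mod int d) j' j"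
proof -
  have "chi d (- p * (N*g11*i' - N*g10*j')) = chi d (- (N*g11*p) * i') * chi d (- (- N*g10*p) * j')"
    by (simp add: chi_add[symmetric] algebra_simps)
  moreover note key_shift_dvd_iff[OF N, of i j i' j' q]
  ultimately show ?thesis
    unfolding ZX_mod_args[OF assms(1)] ZX_mod_eq[OF assms(1)] mod_eq_dvd_iff
    by (auto simp: diff_conv_add_uminus[symmetric])
qed

definition weyl_phase :: "nat \<Rightarrow> int \<Rightarrow> int \<Rightarrow> complex" where
  "weyl_phase d p q = (let p' = p mod int d; q' = q mod int d in
      if d = 2 then \<i> powi (- (p' * q')) else chi d (- (inv_mod d 2 * p' * q')))"

lemma weyl1_eq_phase_ZX: "weyl1 d p q a b = weyl_phase d p q * ZX d (p mod int d) (q mod int d) a b"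
  unfolding weyl1_def weyl_phase_def Let_def by simp

lemma mod_mult_mod_dvd: "m dvd a mod m * (b mod m) - a * b" for a b m :: int
  by (metis mod_eq_dvd_iff mod_mod_trivial mod_mult_eq)

lemma weyl_phase_key_covariant:
  fixes N g00 g01 g10 g11 p q :: int
  assumes "d > 0" and N: "int d dvd N * (g00*g11 - g01*g10) - 1"
  shows "weyl_phase d (- p) (- q)
       = weyl_phase d (- (N*g11*p)) (- (g00*q)) * weyl_phase d (- (- N*g10*p)) (- (g01*q))"
proof (cases "d = 2")
  case True
  have "odd (N * (g00*g11 - g01*g10))"
    using N True by simp
  \<comment> \<open>so at most one of the two products on the right is odd, and the identity holds in \<open>\<int>\<close>\<close>
  then have split: "(- p) mod 2 * ((- q) mod 2) = (- (N*g11*p)) mod 2 * ((- (g00*q)) mod 2)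
       + (- (- N*g10*p)) mod 2 * ((- (g01*q)) mod 2)"
    by (auto simp: mod2_eq_if)
  have powi_split: "\<i> powi (- (x + y)) = \<i> powi (- x) * \<i> powi (- y)" for x y :: int
    unfolding minus_add_distrib by (rule power_int_add) simp
  show ?thesis
    unfolding weyl_phase_def Let_def by (simp only: True simp_thms if_True of_nat_numeral split powi_split)
next
  case False
  let ?c = "inv_mod d 2"
  let ?X0 = "(- p) mod int d * ((- q) mod int d)"
  let ?X1 = "(- (N*g11*p)) mod int d * ((- (g00*q)) mod int d)"
  let ?X2 = "(- (- N*g10*p)) mod int d * ((- (g01*q)) mod int d)"
  have "- (?c * ?X0) - (- (?c * ?X1) + - (?c * ?X2)) =
      ?c * (?X1 - (- (N*g11*p)) * (- (g00*q))) + ?c * (?X2 - (- (- N*g10*p)) * (- (g01*q)))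
    - ?c * (?X0 - (- p) * (- q)) + ?c * (p*q) * (N * (g00*g11 - g01*g10) - 1)"
    by (simp add: algebra_simps)
  then have "int d dvd - (?c * ?X0) - (- (?c * ?X1) + - (?c * ?X2))"
    using N by (metis mod_mult_mod_dvd dvd_add dvd_diff dvd_mult dvd_mult2)
  then have "chi d (- (?c * ?X0)) = chi d (- (?c * ?X1)) * chi d (- (?c * ?X2))"
    by (metis chi_cong[OF assms(1)] chi_add)
  then show ?thesis
    unfolding weyl_phase_def Let_def using False by (simp add: mult.assoc)
qed

lemma weyl1_key_covariant:
  fixes N g00 g01 g10 g11 i j i' j' p q :: int
  assumes "d > 0" and "int d dvd N * (g00*g11 - g01*g10) - 1"
  shows "of_bool ((- N*g01*i + N*g00*j) mod int d = (- N*g01*i' + N*g00*j') mod int d)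
       * weyl1 d (- p) (- q) ((N*g11*i' - N*g10*j') mod int d) ((N*g11*i - N*g10*j) mod int d)
     = weyl1 d (- (N*g11*p)) (- (g00*q)) i' i * weyl1 d (- (- N*g10*p)) (- (g01*q)) j' j"
  unfolding weyl1_eq_phase_ZX weyl_phase_key_covariant[OF assms, of p q]
  using ZX_key_covariant[OF assms, of i j i' j' p q] by (simp only: ac_simps)

lemma prod_of_bool:
  assumes "finite A"
  shows "(\<Prod>x\<in>A. of_bool (P x)) = (of_bool (\<forall>x\<in>A. P x) :: 'a :: comm_semiring_1)"
  using assms by (induction A rule: finite_induct) auto

lemma finite_idx: "finite (idx d n)"
proof -
  have "idx d n \<subseteq> (\<lambda>g k. if k < n then g k else 0) ` (PiE {..<n} (\<lambda>_. {0..<int d}))"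
  proof
    fix x assume x: "x \<in> idx d n"
    then have "restrict x {..<n} \<in> PiE {..<n} (\<lambda>_. {0..<int d})"
      and "x = (\<lambda>k. if k < n then restrict x {..<n} k else 0)"
      by (auto simp: idx_def)
    then show "x \<in> (\<lambda>g k. if k < n then g k else 0) ` (PiE {..<n} (\<lambda>_. {0..<int d}))"
      by blast
  qed
  then show ?thesis by (rule finite_subset) (simp add: finite_PiE)
qed

lemma sum_rotate3:
  "(\<Sum>a\<in>A. \<Sum>b\<in>B. \<Sum>c\<in>C. G a b c) = (\<Sum>b\<in>B. \<Sum>c\<in>C. \<Sum>a\<in>A. G a b c)"
  by (subst sum.swap) (rule sum.cong[OF refl], rule sum.swap)

lemma sum_swap_pairs:
  "(\<Sum>a\<in>A. \<Sum>b\<in>B. \<Sum>c\<in>C. \<Sum>e\<in>E. G a b c e) = (\<Sum>c\<in>C. \<Sum>e\<in>E. \<Sum>a\<in>A. \<Sum>b\<in>B. G a b c e)"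
proof -
  have "(\<Sum>a\<in>A. \<Sum>b\<in>B. \<Sum>c\<in>C. \<Sum>e\<in>E. G a b c e) = (\<Sum>a\<in>A. \<Sum>c\<in>C. \<Sum>e\<in>E. \<Sum>b\<in>B. G a b c e)"
    by (rule sum.cong[OF refl], rule sum_rotate3)
  also have "\<dots> = (\<Sum>c\<in>C. \<Sum>e\<in>E. \<Sum>a\<in>A. \<Sum>b\<in>B. G a b c e)"
    by (rule sum_rotate3)
  finally show ?thesis .
qed

lemma sum_sum_delta:
  fixes g :: "'a \<Rightarrow> 'b \<Rightarrow> 'c::comm_semiring_1"
  assumes "finite A" "finite B" "x \<in> A" "y \<in> B"
  shows "(\<Sum>a\<in>A. \<Sum>c\<in>B. of_bool (a = x \<and> c = y \<and> P) * g a c) = of_bool P * g x y"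
proof -
  have "A \<inter> {x} = {x}" "B \<inter> {y} = {y}" using assms by auto
  then show ?thesis using assms by (simp add: of_bool_conj mult.assoc flip: sum_distrib_left)
qed

lemma ptraceB_conj_map:
  fixes U T :: op2
  assumes U: "\<And>x z. U x z = of_bool (x = f z)"
    and f: "\<And>z. z \<in> idx d n \<times> idx d n \<Longrightarrow> f z \<in> idx d n \<times> idx d n"
  shows "ptraceB d n (mmul2 d n (mmul2 d n U T) (adj2 U)) a c =
    (\<Sum>z\<in>idx d n \<times> idx d n. \<Sum>z'\<in>idx d n \<times> idx d n.
       of_bool (a = fst (f z) \<and> c = fst (f z') \<and> snd (f z) = snd (f z')) * T z z')"
proof -
  let ?I = "idx d n"
  have cnj_of_bool: "cnj (of_bool b) = of_bool b" for b
    by (cases b) simp_all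
  have "ptraceB d n (mmul2 d n (mmul2 d n U T) (adj2 U)) a c =
      (\<Sum>j\<in>?I. \<Sum>z'\<in>?I \<times> ?I. \<Sum>z\<in>?I \<times> ?I. of_bool ((a, j) = f z) * T z z' * of_bool ((c, j) = f z'))"
    unfolding ptraceB_def mmul2_def adj2_def U by (simp add: sum_distrib_right cnj_of_bool)
  also have "\<dots> = (\<Sum>z\<in>?I \<times> ?I. \<Sum>z'\<in>?I \<times> ?I. \<Sum>j\<in>?I.
      of_bool ((a, j) = f z) * T z z' * of_bool ((c, j) = f z'))"
    by (subst sum_rotate3) (rule sum.swap)
  also have "\<dots> = (\<Sum>z\<in>?I \<times> ?I. \<Sum>z'\<in>?I \<times> ?I.
       of_bool (a = fst (f z) \<and> c = fst (f z') \<and> snd (f z) = snd (f z')) * T z z')"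
  proof (intro sum.cong refl)
    fix z z' assume "z \<in> ?I \<times> ?I"
    then have "snd (f z) \<in> ?I" using f by (simp add: mem_Times_iff)
    then show "(\<Sum>j\<in>?I. of_bool ((a, j) = f z) * T z z' * of_bool ((c, j) = f z')) =
        of_bool (a = fst (f z) \<and> c = fst (f z') \<and> snd (f z) = snd (f z')) * T z z'"
      by (auto simp: prod_eq_iff finite_idx sum.delta intro!: sum.cong split: if_splits)
  qed
  finally show ?thesis .
qed

lemma tr_mmul: "tr d n (mmul d n A B) = (\<Sum>a\<in>idx d n. \<Sum>c\<in>idx d n. A a c * B c a)"
  unfolding tr_def mmul_def ..

lemma tr_mmul_ptraceB_conj_map:
  fixes U T :: op2
  assumes U: "\<And>x z. U x z = of_bool (x = f z)"
    and f: "\<And>z. z \<in> idx d n \<times> idx d n \<Longrightarrow> f z \<in> idx d n \<times> idx d n"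
  shows "tr d n (mmul d n (ptraceB d n (mmul2 d n (mmul2 d n U T) (adj2 U))) W) =
    (\<Sum>z\<in>idx d n \<times> idx d n. \<Sum>z'\<in>idx d n \<times> idx d n.
       T z z' * (of_bool (snd (f z) = snd (f z')) * W (fst (f z')) (fst (f z))))"
proof -
  let ?I = "idx d n"
  have "tr d n (mmul d n (ptraceB d n (mmul2 d n (mmul2 d n U T) (adj2 U))) W) =
      (\<Sum>a\<in>?I. \<Sum>c\<in>?I. \<Sum>z\<in>?I \<times> ?I. \<Sum>z'\<in>?I \<times> ?I.
         of_bool (a = fst (f z) \<and> c = fst (f z') \<and> snd (f z) = snd (f z')) * (T z z' * W c a))"
    unfolding tr_mmul by (simp add: ptraceB_conj_map[OF U f] sum_distrib_right mult.assoc)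
  also have "\<dots> = (\<Sum>z\<in>?I \<times> ?I. \<Sum>z'\<in>?I \<times> ?I. \<Sum>a\<in>?I. \<Sum>c\<in>?I.
         of_bool (a = fst (f z) \<and> c = fst (f z') \<and> snd (f z) = snd (f z')) * (T z z' * W c a))"
    by (rule sum_swap_pairs)
  also have "\<dots> = (\<Sum>z\<in>?I \<times> ?I. \<Sum>z'\<in>?I \<times> ?I.
       T z z' * (of_bool (snd (f z) = snd (f z')) * W (fst (f z')) (fst (f z))))"
  proof (intro sum.cong refl)
    fix z z' assume "z \<in> ?I \<times> ?I" "z' \<in> ?I \<times> ?I"
    then have "fst (f z) \<in> ?I" "fst (f z') \<in> ?I" using f by (simp_all add: mem_Times_iff)
    then show "(\<Sum>a\<in>?I. \<Sum>c\<in>?I.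
         of_bool (a = fst (f z) \<and> c = fst (f z') \<and> snd (f z) = snd (f z')) * (T z z' * W c a)) =
       T z z' * (of_bool (snd (f z) = snd (f z')) * W (fst (f z')) (fst (f z)))"
      by (subst sum_sum_delta[OF finite_idx finite_idx]) (simp_all add: mult.left_commute)
  qed
  finally show ?thesis .
qed

lemma tr_mmul_mult_tr_mmul:
  "tr d n (mmul d n \<rho> A) * tr d n (mmul d n \<sigma> B) =
    (\<Sum>z\<in>idx d n \<times> idx d n. \<Sum>z'\<in>idx d n \<times> idx d n.
       tensor \<rho> \<sigma> z z' * (A (fst z') (fst z) * B (snd z') (snd z)))"
proof -
  let ?I = "idx d n"
  have "tr d n (mmul d n \<rho> A) * tr d n (mmul d n \<sigma> B) =
      (\<Sum>i\<in>?I. \<Sum>i'\<in>?I. \<Sum>j\<in>?I. \<Sum>j'\<in>?I. \<rho> i i' * A i' i * (\<sigma> j j' * B j' j))"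
    unfolding tr_mmul by (simp only: sum_distrib_right) (simp only: sum_distrib_left)
  also have "\<dots> = (\<Sum>i\<in>?I. \<Sum>j\<in>?I. \<Sum>i'\<in>?I. \<Sum>j'\<in>?I. \<rho> i i' * A i' i * (\<sigma> j j' * B j' j))"
    by (rule sum.cong[OF refl], rule sum.swap)
  also have "\<dots> = (\<Sum>z\<in>?I \<times> ?I. \<Sum>z'\<in>?I \<times> ?I.
       tensor \<rho> \<sigma> z z' * (A (fst z') (fst z) * B (snd z') (snd z)))"
    unfolding sum.cartesian_product' tensor_def by (simp add: mult_ac)
  finally show ?thesis .
qed

definition key_map :: "nat \<Rightarrow> int \<Rightarrow> int \<Rightarrow> int \<Rightarrow> int \<Rightarrow> int \<Rightarrow>
    (nat \<Rightarrow> int) \<times> (nat \<Rightarrow> int) \<Rightarrow> (nat \<Rightarrow> int) \<times> (nat \<Rightarrow> int)" where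
  "key_map d N g00 g01 g10 g11 z =
     (vmod d (\<lambda>k. N * g11 * fst z k - N * g10 * snd z k),
      vmod d (\<lambda>k. - N * g01 * fst z k + N * g00 * snd z k))"

lemma keyU_eq_key_map:
  "keyU d g00 g01 g10 g11 x z = of_bool (x = key_map d (inv_mod d (g00 * g11 - g01 * g10)) g00 g01 g10 g11 z)"
  unfolding keyU_def key_map_def Let_def by (cases x) auto

lemma key_map_idx:
  assumes "d > 0" and "z \<in> idx d n \<times> idx d n"
  shows "key_map d N g00 g01 g10 g11 z \<in> idx d n \<times> idx d n"
  using assms unfolding key_map_def idx_def vmod_def by auto

lemma weyl_key_map_covariant:
  assumes "d > 0" and N: "int d dvd N * (g00*g11 - g01*g10) - 1"
    and "z \<in> idx d n \<times> idx d n" and "z' \<in> idx d n \<times> idx d n"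
  defines "f \<equiv> key_map d N g00 g01 g10 g11"
  shows "of_bool (snd (f z) = snd (f z')) * weyl d n (\<lambda>k. - p k) (\<lambda>k. - q k) (fst (f z')) (fst (f z))
       = weyl d n (\<lambda>k. - (N * g11 * p k)) (\<lambda>k. - (g00 * q k)) (fst z') (fst z)
       * weyl d n (\<lambda>k. - (- N * g10 * p k)) (\<lambda>k. - (g01 * q k)) (snd z') (snd z)"
proof -
  obtain i j i' j' where z: "z = (i, j)" and z': "z' = (i', j')" by (cases z, cases z')
  have "\<forall>k\<ge>n. i k = 0 \<and> j k = 0 \<and> i' k = 0 \<and> j' k = 0"
    using assms(3,4) unfolding z z' idx_def by auto
  then have "snd (f z) = snd (f z') \<longleftrightarrow>
      (\<forall>k<n. (- N*g01*i k + N*g00*j k) mod int d = (- N*g01*i' k + N*g00*j' k) mod int d)"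
    unfolding f_def key_map_def z z' vmod_def by (auto simp: fun_eq_iff) (metis not_le)
  then have key_B: "of_bool (snd (f z) = snd (f z')) =
      (\<Prod>k<n. of_bool ((- N*g01*i k + N*g00*j k) mod int d = (- N*g01*i' k + N*g00*j' k) mod int d) :: complex)"
    by (auto simp: prod_of_bool)
  show ?thesis
    unfolding key_B weyl_def prod.distrib[symmetric]
    by (rule prod.cong[OF refl])
      (unfold f_def key_map_def z z' vmod_def fst_conv snd_conv, rule weyl1_key_covariant[OF assms(1) N])
qed

theorem mainTheorem7:
  fixes d n :: nat and g00 g01 g10 g11 :: int and \<rho> \<sigma> :: op and p q :: "nat \<Rightarrow> int"
  assumes "prime d" and "n \<ge> 1"
    and "(g00 * g11 - g01 * g10) mod int d \<noteq> 0"
    and "is_state d n \<rho>" and "is_state d n \<sigma>"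
    and "p \<in> idx d n" and "q \<in> idx d n"
  shows "charfun d n (conv d n g00 g01 g10 g11 \<rho> \<sigma>) p q =
           (let N = inv_mod d (g00 * g11 - g01 * g10) in
            charfun d n \<rho> (\<lambda>k. N * g11 * p k) (\<lambda>k. g00 * q k)
          * charfun d n \<sigma> (\<lambda>k. - N * g10 * p k) (\<lambda>k. g01 * q k))"
proof -
  define N where "N = inv_mod d (g00 * g11 - g01 * g10)"
  let ?I = "idx d n" and ?f = "key_map d N g00 g01 g10 g11"
  have "d > 0" using \<open>prime d\<close> prime_gt_0_nat by blast
  have N: "int d dvd N * (g00 * g11 - g01 * g10) - 1"
    unfolding N_def using assms(1,3) by (rule inv_mod_mult_dvd)
  have "charfun d n (conv d n g00 g01 g10 g11 \<rho> \<sigma>) p q =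
      (\<Sum>z\<in>?I \<times> ?I. \<Sum>z'\<in>?I \<times> ?I. tensor \<rho> \<sigma> z z' *
         (of_bool (snd (?f z) = snd (?f z')) * weyl d n (\<lambda>k. - p k) (\<lambda>k. - q k) (fst (?f z')) (fst (?f z))))"
    unfolding charfun_def conv_def
    by (rule tr_mmul_ptraceB_conj_map) (simp_all add: keyU_eq_key_map N_def key_map_idx \<open>d > 0\<close>)
  also have "\<dots> = (\<Sum>z\<in>?I \<times> ?I. \<Sum>z'\<in>?I \<times> ?I. tensor \<rho> \<sigma> z z' *
         (weyl d n (\<lambda>k. - (N * g11 * p k)) (\<lambda>k. - (g00 * q k)) (fst z') (fst z)
        * weyl d n (\<lambda>k. - (- N * g10 * p k)) (\<lambda>k. - (g01 * q k)) (snd z') (snd z)))"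
    using weyl_key_map_covariant[OF \<open>d > 0\<close> N] by (intro sum.cong refl) simp
  also have "\<dots> = charfun d n \<rho> (\<lambda>k. N * g11 * p k) (\<lambda>k. g00 * q k)
                 * charfun d n \<sigma> (\<lambda>k. - N * g10 * p k) (\<lambda>k. g01 * q k)"
    unfolding charfun_def by (rule tr_mmul_mult_tr_mmul[symmetric])
  finally show ?thesis unfolding N_def Let_def .
qed

end
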